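(* Fix a nondegenerate triangle $E=E_1E_2E_3$ in the real affine plane and use barycentric coordinates of points with respect to $E$. Call a "parallel triangle" any triangle $D=D_1D_2D_3$ whose sides $D_iD_j$ are parallel to $E_iE_j$; such $D$ is the image of $E$ (with $D_i\mapsto E_i$ reversed) under a homothety, i.e. there is a unique real $d\neq 0$ such that the homothety (or translation, when $d=1$) of ratio $d$ maps $D_i$ to $E_i$ for all $i$. If $(d_1,d_2,d_3)$, $d_1+d_2+d_3=1$, are the barycentric coordinates of the centroid of $D$, the barycentric coordinates of $D$ are $(\delta_1,\delta_2,\delta_3)=(d\,d_1,d\,d_2,d\,d_3)$. For parallel triangles $A,B$ define the pre-sum $C=A\boxplus B$ by $C_k=A_iB_j\cap A_jB_i$ for each permutation $(i,j,k)$ of $(1,2,3)$, and define the sum $A+B$ as the triangle obtained from $C$ by the point reflection in the centroid of $C$ (keeping vertex labels). Let $A,B$ be parallel triangles with barycentric coordinates $(\alpha_1,\alpha_2,\alpha_3)$ and $(\beta_1,\beta_2,\beta_3)$ such that the points $C_1,C_2,C_3$ are well defined points of the affine plane forming a nondegenerate triangle. Then $A+B$ is a parallel triangle whose barycentric coordinates are $(\alpha_1+\beta_1,\alpha_2+\beta_2,\alpha_3+\beta_3)$.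
   Context: Barycentric coordinates of a point $X$ with respect to $E$ are the reals $(x_1,x_2,x_3)$ with $x_1+x_2+x_3=1$ and $X=x_1E_1+x_2E_2+x_3E_3$. The centroid of a triangle is the mean of its vertices. *)

theory Defs
  imports "HOL-Analysis.Analysis"
begin

text \<open>Triangles are labelled by the three-element type 3 (vertices 0,1,2 stand for 1,2,3).\<close>

definition nondeg_tri :: "(3 \<Rightarrow> real^2) \<Rightarrow> bool" where
  "nondeg_tri T \<longleftrightarrow> \<not> collinear (range T)"

definition bary :: "(3 \<Rightarrow> real^2) \<Rightarrow> real^2 \<Rightarrow> (3 \<Rightarrow> real)" where
  "bary E X = (THE x. sum x UNIV = 1 \<and> X = (\<Sum>i\<in>UNIV. x i *\<^sub>R E i))"

definition tri_centroid :: "(3 \<Rightarrow> real^2) \<Rightarrow> real^2" where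
  "tri_centroid D = (1/3) *\<^sub>R (\<Sum>i\<in>UNIV. D i)"

definition parallel_tri :: "(3 \<Rightarrow> real^2) \<Rightarrow> (3 \<Rightarrow> real^2) \<Rightarrow> bool" where
  "parallel_tri E D \<longleftrightarrow> nondeg_tri D \<and>
     (\<forall>i j. i \<noteq> j \<longrightarrow> (\<exists>t. D i - D j = t *\<^sub>R (E i - E j)))"

definition hratio :: "(3 \<Rightarrow> real^2) \<Rightarrow> (3 \<Rightarrow> real^2) \<Rightarrow> real" where
  "hratio E D = (THE d. d \<noteq> 0 \<and> (\<forall>i j. E i - E j = d *\<^sub>R (D i - D j)))"

definition tri_coords :: "(3 \<Rightarrow> real^2) \<Rightarrow> (3 \<Rightarrow> real^2) \<Rightarrow> (3 \<Rightarrow> real)" where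
  "tri_coords E D = (\<lambda>i. hratio E D * bary E (tri_centroid D) i)"

end

theory Submission
  imports Defs
begin

text \<open>Every parallel triangle is a homothetic image \<open>k \<mapsto> G + a (E\<^sub>k - G\<^sub>E)\<close> of \<open>E\<close>
  with \<open>a \<noteq> 0\<close>, where \<open>G\<close> is its centroid; its ratio is then \<open>1/a\<close>, so its coordinates are
  those of \<open>G\<close> divided by \<open>a\<close>. For \<open>A\<close> given by \<open>(a, G\<^sub>A)\<close> and \<open>B\<close> by \<open>(b, G\<^sub>B)\<close>, put
  \<open>u = b/(a+b)\<close> and \<open>c = ab/(a+b)\<close>. The point \<open>u A\<^sub>i + (1-u) B\<^sub>j\<close> of the line \<open>A\<^sub>iB\<^sub>j\<close>
  equals \<open>u G\<^sub>A + (1-u) G\<^sub>B + c ((E\<^sub>i - G\<^sub>E) + (E\<^sub>j - G\<^sub>E))\<close>, which is symmetric in \<open>i, j\<close>;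
  so it also lies on \<open>A\<^sub>jB\<^sub>i\<close> and is the vertex \<open>C\<^sub>k\<close>. Since
  \<open>(E\<^sub>i - G\<^sub>E) + (E\<^sub>j - G\<^sub>E) = -(E\<^sub>k - G\<^sub>E)\<close>, the pre-sum is the homothetic image of ratio
  \<open>-c\<close> centred at \<open>u G\<^sub>A + (1-u) G\<^sub>B\<close>, and \<open>A + B\<close> the one of ratio \<open>c\<close>. Barycentric
  coordinates are affine, so the coordinates of \<open>A + B\<close> are
  \<open>(u \<alpha> + (1-u) \<beta>)/c = \<alpha>/a + \<beta>/b\<close>, with \<open>\<alpha>, \<beta>\<close> the coordinates of \<open>G\<^sub>A, G\<^sub>B\<close>.
  The case \<open>a + b = 0\<close> cannot occur: then \<open>A\<^sub>1B\<^sub>2\<close> and \<open>A\<^sub>2B\<^sub>1\<close> are distinct parallel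
  lines or coincide.\<close>

lemma range_3: "range (T :: 3 \<Rightarrow> 'a) = {T 1, T 2, T 3}"
  by (simp add: UNIV_3)

lemma sum_other_two_3:
  fixes f :: "3 \<Rightarrow> 'a::comm_monoid_add"
  assumes "i \<noteq> j" "j \<noteq> k" "i \<noteq> k"
  shows "f i + f j + f k = sum f UNIV"
proof -
  have "{i, j, k} = (UNIV :: 3 set)"
    by (rule card_subset_eq) (use assms in auto)
  then show ?thesis using assms by (auto simp flip: \<open>{i, j, k} = UNIV\<close> simp: ac_simps)
qed

lemma ex_other_two_3: "\<exists>i j :: 3. i \<noteq> j \<and> j \<noteq> k \<and> i \<noteq> k"
proof -
  have "(1::3) \<noteq> 2" "(2::3) \<noteq> 3" "(1::3) \<noteq> 3" by simp_all
  then show ?thesis using exhaust_3[of k] by metis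
qed

lemma nondeg_tri_edges_independent:
  assumes "nondeg_tri E" and "u *\<^sub>R (E 1 - E 3) + v *\<^sub>R (E 2 - E 3) = 0"
  shows "u = 0 \<and> v = 0"
proof -
  have nc: "\<not> collinear {E 2, E 1, E 3}"
    using assms(1) unfolding nondeg_tri_def range_3 by (simp add: insert_commute)
  show ?thesis
  proof (cases "u = 0")
    case True
    then have "v = 0 \<or> E 2 = E 3" using assms(2) by simp
    moreover have "E 2 \<noteq> E 3" using nc by (auto simp: insert_commute)
    ultimately show ?thesis using True by blast
  next
    case False
    have uv: "u *\<^sub>R (E 1 - E 3) = - (v *\<^sub>R (E 2 - E 3))"
      using assms(2) by (simp only: eq_neg_iff_add_eq_0)
    have "E 1 - E 3 = (1 / u) *\<^sub>R (u *\<^sub>R (E 1 - E 3))" using False by simp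
    also have "\<dots> = (- v / u) *\<^sub>R (E 2 - E 3)" unfolding uv by simp
    finally have "E 1 = (- v / u) *\<^sub>R E 2 + (1 - (- v / u)) *\<^sub>R E 3"
      by (simp add: algebra_simps)
    then have "collinear {E 2, E 1, E 3}" using collinear_3_expand by blast
    with nc show ?thesis by blast
  qed
qed

lemma nondeg_tri_edges_span:
  assumes "nondeg_tri E"
  obtains u v where "X - E 3 = u *\<^sub>R (E 1 - E 3) + v *\<^sub>R (E 2 - E 3)"
proof -
  have "\<not> collinear {E 3, E 1, E 2}"
    using assms unfolding nondeg_tri_def range_3 by (simp add: insert_commute)
  then have ne: "E 3 \<noteq> E 1" "E 3 \<noteq> E 2" "E 1 \<noteq> E 2"
    and "\<not> affine_dependent (insert (E 3) {E 1, E 2})"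
    using collinear_3_eq_affine_dependent by auto
  then have "independent {E 1 - E 3, E 2 - E 3}"
    using affine_dependent_iff_dependent[of "E 3" "{E 1, E 2}"] by simp
  moreover have "card {E 1 - E 3, E 2 - E 3} = dim (UNIV :: (real^2) set)"
    using ne by simp
  ultimately have "X - E 3 \<in> span {E 1 - E 3, E 2 - E 3}"
    using card_eq_dim[of "{E 1 - E 3, E 2 - E 3}" UNIV] by auto
  then show ?thesis
    using that unfolding span_breakdown_eq span_singleton
    by (auto simp: algebra_simps)
qed

lemma bary_unique:
  assumes "nondeg_tri E" "sum x UNIV = 1" "X = (\<Sum>i\<in>UNIV. x i *\<^sub>R E i)"
  shows "bary E X = x"
  unfolding bary_def
proof (rule the_equality)
  show "sum x UNIV = 1 \<and> X = (\<Sum>i\<in>UNIV. x i *\<^sub>R E i)" using assms by simp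
next
  fix y assume y: "sum y UNIV = 1 \<and> X = (\<Sum>i\<in>UNIV. y i *\<^sub>R E i)"
  have x3: "x 3 = 1 - x 1 - x 2" and y3: "y 3 = 1 - y 1 - y 2"
    using assms(2) y by (auto simp: sum_3)
  have "(\<Sum>i\<in>UNIV. x i *\<^sub>R E i) = (\<Sum>i\<in>UNIV. y i *\<^sub>R E i)" using assms(3) y by simp
  then have "(y 1 - x 1) *\<^sub>R (E 1 - E 3) + (y 2 - x 2) *\<^sub>R (E 2 - E 3) = 0"
    unfolding sum_3 x3 y3 by (simp add: algebra_simps)
  then have "y 1 - x 1 = 0 \<and> y 2 - x 2 = 0"
    using nondeg_tri_edges_independent[OF assms(1)] by blast
  then have "y 1 = x 1" "y 2 = x 2" "y 3 = x 3" using x3 y3 by auto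
  then show "y = x" by (metis exhaust_3 ext)
qed

lemma bary_exists:
  assumes "nondeg_tri E"
  obtains x where "sum x UNIV = 1" "X = (\<Sum>i\<in>UNIV. x i *\<^sub>R E i)"
proof -
  obtain u v where uv: "X - E 3 = u *\<^sub>R (E 1 - E 3) + v *\<^sub>R (E 2 - E 3)"
    using nondeg_tri_edges_span[OF assms] .
  let ?x = "\<lambda>i :: 3. if i = 1 then u else if i = 2 then v else 1 - u - v"
  have "sum ?x UNIV = 1" by (simp add: sum_3)
  moreover have "X = (\<Sum>i\<in>UNIV. ?x i *\<^sub>R E i)"
    using uv by (simp add: sum_3 algebra_simps)
  ultimately show ?thesis using that by blast
qed

lemma bary_affine_combination:
  assumes "nondeg_tri E"
  shows "bary E (u *\<^sub>R X + (1 - u) *\<^sub>R Y) = (\<lambda>i. u * bary E X i + (1 - u) * bary E Y i)"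
proof -
  obtain x where x: "sum x UNIV = 1" "X = (\<Sum>i\<in>UNIV. x i *\<^sub>R E i)"
    using bary_exists[OF assms] .
  obtain y where y: "sum y UNIV = 1" "Y = (\<Sum>i\<in>UNIV. y i *\<^sub>R E i)"
    using bary_exists[OF assms] .
  have "bary E (u *\<^sub>R X + (1 - u) *\<^sub>R Y) = (\<lambda>i. u * x i + (1 - u) * y i)"
  proof (rule bary_unique[OF assms])
    show "(\<Sum>i\<in>UNIV. u * x i + (1 - u) * y i) = 1"
      using x(1) y(1) by (simp add: sum.distrib flip: sum_distrib_left)
    show "u *\<^sub>R X + (1 - u) *\<^sub>R Y = (\<Sum>i\<in>UNIV. (u * x i + (1 - u) * y i) *\<^sub>R E i)"
      unfolding x(2) y(2) by (simp add: scaleR_sum_right scaleR_add_left sum.distrib)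
  qed
  then show ?thesis using bary_unique[OF assms x] bary_unique[OF assms y] by simp
qed

lemma tri_centroid_homothetic:
  "tri_centroid (\<lambda>k. G + a *\<^sub>R (E k - tri_centroid E)) = G"
  unfolding tri_centroid_def sum_3 by (simp add: vec_eq_iff field_simps)

lemma parallel_tri_homothetic:
  assumes "nondeg_tri E" "parallel_tri E A"
  obtains a G where "a \<noteq> 0" "A = (\<lambda>k. G + a *\<^sub>R (E k - tri_centroid E))"
proof -
  obtain t13 where t13: "A 1 - A 3 = t13 *\<^sub>R (E 1 - E 3)"
    using assms(2) unfolding parallel_tri_def by force
  obtain t23 where t23: "A 2 - A 3 = t23 *\<^sub>R (E 2 - E 3)"
    using assms(2) unfolding parallel_tri_def by force
  obtain t12 where t12: "A 1 - A 2 = t12 *\<^sub>R (E 1 - E 2)"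
    using assms(2) unfolding parallel_tri_def by force
  have "A 1 - A 3 = (A 1 - A 2) + (A 2 - A 3)" by simp
  then have "(t13 - t12) *\<^sub>R (E 1 - E 3) + (t12 - t23) *\<^sub>R (E 2 - E 3) = 0"
    unfolding t13 t12 t23 by (simp add: algebra_simps)
  then have "t13 - t12 = 0 \<and> t12 - t23 = 0"
    using nondeg_tri_edges_independent[OF assms(1)] by blast
  then have "t23 = t13" by auto
  define G where "G = A 3 - t13 *\<^sub>R (E 3 - tri_centroid E)"
  have A: "A = (\<lambda>k. G + t13 *\<^sub>R (E k - tri_centroid E))"
  proof
    fix k :: 3
    show "A k = G + t13 *\<^sub>R (E k - tri_centroid E)"
      using exhaust_3[of k] t13 t23 \<open>t23 = t13\<close> unfolding G_def by (auto simp: algebra_simps)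
  qed
  moreover have "t13 \<noteq> 0"
  proof
    assume "t13 = 0"
    then have "range A = {G}" by (subst A) auto
    then show False using assms(2) unfolding parallel_tri_def nondeg_tri_def by simp
  qed
  ultimately show ?thesis using that by blast
qed

lemma nondeg_tri_homothetic:
  assumes "nondeg_tri E" "a \<noteq> 0"
  shows "nondeg_tri (\<lambda>k. G + a *\<^sub>R (E k - Z))"
  unfolding nondeg_tri_def
proof
  assume "collinear (range (\<lambda>k. G + a *\<^sub>R (E k - Z)))"
  then obtain v where v: "\<forall>i j. \<exists>t. (G + a *\<^sub>R (E i - Z)) - (G + a *\<^sub>R (E j - Z)) = t *\<^sub>R v"
    unfolding collinear_def by blast
  have "\<exists>t. E i - E j = t *\<^sub>R v" for i j
  proof -
    obtain t where t: "(G + a *\<^sub>R (E i - Z)) - (G + a *\<^sub>R (E j - Z)) = t *\<^sub>R v"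
      using v by blast
    have "E i - E j = (1 / a) *\<^sub>R ((G + a *\<^sub>R (E i - Z)) - (G + a *\<^sub>R (E j - Z)))"
      using assms(2) by (simp add: algebra_simps)
    also have "\<dots> = (t / a) *\<^sub>R v" unfolding t by simp
    finally show ?thesis ..
  qed
  then have "collinear (range E)" unfolding collinear_def by blast
  with assms(1) show False unfolding nondeg_tri_def by blast
qed

lemma parallel_tri_of_homothetic:
  assumes "nondeg_tri E" "a \<noteq> 0"
  shows "parallel_tri E (\<lambda>k. G + a *\<^sub>R (E k - Z))"
proof -
  have "(G + a *\<^sub>R (E i - Z)) - (G + a *\<^sub>R (E j - Z)) = a *\<^sub>R (E i - E j)" for i j
    by (simp add: algebra_simps)
  then show ?thesis
    unfolding parallel_tri_def using nondeg_tri_homothetic[OF assms] by blast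
qed

lemma hratio_homothetic:
  assumes "nondeg_tri E" "a \<noteq> 0"
  shows "hratio E (\<lambda>k. G + a *\<^sub>R (E k - Z)) = 1 / a"
  unfolding hratio_def
proof (rule the_equality)
  show "1 / a \<noteq> 0 \<and> (\<forall>i j. E i - E j = (1 / a) *\<^sub>R ((G + a *\<^sub>R (E i - Z)) - (G + a *\<^sub>R (E j - Z))))"
    using assms(2) by (simp add: algebra_simps)
next
  fix d assume "d \<noteq> 0 \<and> (\<forall>i j. E i - E j = d *\<^sub>R ((G + a *\<^sub>R (E i - Z)) - (G + a *\<^sub>R (E j - Z))))"
  then have "E 1 - E 3 = d *\<^sub>R ((G + a *\<^sub>R (E 1 - Z)) - (G + a *\<^sub>R (E 3 - Z)))" by blast
  also have "\<dots> = (d * a) *\<^sub>R (E 1 - E 3)" by (simp add: algebra_simps)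
  finally have "(d * a - 1) *\<^sub>R (E 1 - E 3) = 0"
    by (simp add: scaleR_left_diff_distrib)
  moreover have "E 1 \<noteq> E 3"
    using assms(1) unfolding nondeg_tri_def range_3 by (auto simp: insert_commute)
  ultimately show "d = 1 / a" using assms(2) by (simp add: field_simps)
qed

lemma tri_coords_homothetic:
  assumes "nondeg_tri E" "a \<noteq> 0"
  shows "tri_coords E (\<lambda>k. G + a *\<^sub>R (E k - tri_centroid E)) = (\<lambda>i. bary E G i / a)"
  unfolding tri_coords_def hratio_homothetic[OF assms] tri_centroid_homothetic by simp

lemma centroid_reflection_homothetic:
  "(\<lambda>k. 2 *\<^sub>R tri_centroid (\<lambda>k. G + a *\<^sub>R (E k - tri_centroid E)) - (G + a *\<^sub>R (E k - tri_centroid E)))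
    = (\<lambda>k. G + (- a) *\<^sub>R (E k - tri_centroid E))"
  unfolding tri_centroid_homothetic by (simp add: algebra_simps scaleR_2)

lemma affine_hull_2_translate:
  assumes "x \<in> affine hull {P, Q}"
  shows "x + (Q - P) \<in> affine hull {P, Q}"
proof -
  obtain u where "x = P + u *\<^sub>R (Q - P)" using assms unfolding affine_hull_2_alt by auto
  then have "x + (Q - P) = P + (u + 1) *\<^sub>R (Q - P)" by (simp add: algebra_simps)
  then show ?thesis unfolding affine_hull_2_alt by auto
qed

lemma parallel_lines_inter_not_singleton:
  assumes "P \<noteq> Q" "Q - P = Q' - P'"
  shows "affine hull {P, Q} \<inter> affine hull {P', Q'} \<noteq> {z}"
proof
  assume z: "affine hull {P, Q} \<inter> affine hull {P', Q'} = {z}"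
  then have "z + (Q - P) \<in> affine hull {P, Q}" "z + (Q' - P') \<in> affine hull {P', Q'}"
    using affine_hull_2_translate by blast+
  then have "z + (Q - P) \<in> affine hull {P, Q} \<inter> affine hull {P', Q'}"
    unfolding assms(2) by blast
  moreover have "z + (Q - P) \<noteq> z" using assms(1) by simp
  ultimately show False using z by blast
qed

lemma presum_ratio_sum_nonzero:
  assumes "A = (\<lambda>k. G\<^sub>A + a *\<^sub>R (E k - Z))" "B = (\<lambda>k. G\<^sub>B + b *\<^sub>R (E k - Z))"
    and "A 1 \<noteq> B 2" "affine hull {A 1, B 2} \<inter> affine hull {A 2, B 1} = {z}"
  shows "a + b \<noteq> 0"
proof
  assume "a + b = 0"
  then have "b = - a" by simp
  then have "B 2 - A 1 = B 1 - A 2"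
    unfolding assms(1,2) by (simp add: algebra_simps)
  with assms(3,4) show False using parallel_lines_inter_not_singleton by blast
qed

lemma homothetic_cross_lines_meet:
  assumes "a + b \<noteq> 0"
  defines "u \<equiv> b / (a + b)" and "c \<equiv> a * b / (a + b)"
  shows "u *\<^sub>R G\<^sub>A + (1 - u) *\<^sub>R G\<^sub>B + c *\<^sub>R ((E i - Z) + (E j - Z))
    \<in> affine hull {G\<^sub>A + a *\<^sub>R (E i - Z), G\<^sub>B + b *\<^sub>R (E j - Z)}
     \<inter> affine hull {G\<^sub>A + a *\<^sub>R (E j - Z), G\<^sub>B + b *\<^sub>R (E i - Z)}"
proof -
  have "1 - u = a / (a + b)" using assms(1) by (simp add: u_def field_simps)
  then have "u * a = c" "(1 - u) * b = c" by (simp_all add: u_def c_def)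
  then have "u *\<^sub>R G\<^sub>A + (1 - u) *\<^sub>R G\<^sub>B + c *\<^sub>R ((E i - Z) + (E j - Z))
      = u *\<^sub>R (G\<^sub>A + a *\<^sub>R (E i - Z)) + (1 - u) *\<^sub>R (G\<^sub>B + b *\<^sub>R (E j - Z))"
    "u *\<^sub>R G\<^sub>A + (1 - u) *\<^sub>R G\<^sub>B + c *\<^sub>R ((E i - Z) + (E j - Z))
      = u *\<^sub>R (G\<^sub>A + a *\<^sub>R (E j - Z)) + (1 - u) *\<^sub>R (G\<^sub>B + b *\<^sub>R (E i - Z))"
    by (simp_all add: scaleR_add_right ac_simps)
  then show ?thesis unfolding affine_hull_2 by fastforce
qed

lemma presum_homothetic:
  assumes "a + b \<noteq> 0"
    and A: "A = (\<lambda>k. G\<^sub>A + a *\<^sub>R (E k - tri_centroid E))"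
    and B: "B = (\<lambda>k. G\<^sub>B + b *\<^sub>R (E k - tri_centroid E))"
    and presum: "\<And>i j k. i \<noteq> j \<Longrightarrow> j \<noteq> k \<Longrightarrow> i \<noteq> k \<Longrightarrow>
      affine hull {A i, B j} \<inter> affine hull {A j, B i} = {C k}"
  defines "u \<equiv> b / (a + b)" and "c \<equiv> a * b / (a + b)"
  shows "C = (\<lambda>k. (u *\<^sub>R G\<^sub>A + (1 - u) *\<^sub>R G\<^sub>B) + (- c) *\<^sub>R (E k - tri_centroid E))"
proof
  fix k :: 3
  obtain i j where ijk: "i \<noteq> j" "j \<noteq> k" "i \<noteq> k" using ex_other_two_3 by blast
  have "C k = u *\<^sub>R G\<^sub>A + (1 - u) *\<^sub>R G\<^sub>B
      + c *\<^sub>R ((E i - tri_centroid E) + (E j - tri_centroid E))"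
    using homothetic_cross_lines_meet[OF assms(1), where G\<^sub>A = G\<^sub>A and G\<^sub>B = G\<^sub>B
        and E = E and Z = "tri_centroid E" and i = i and j = j, unfolded presum[OF ijk, unfolded A B]]
    unfolding u_def c_def by simp
  moreover have "tri_centroid E + tri_centroid E + tri_centroid E = sum E UNIV"
    unfolding tri_centroid_def by (simp flip: scaleR_add_left)
  then have "(E i - tri_centroid E) + (E j - tri_centroid E) = - (E k - tri_centroid E)"
    using sum_other_two_3[OF ijk, of E] by (simp add: algebra_simps)
  ultimately show "C k = (u *\<^sub>R G\<^sub>A + (1 - u) *\<^sub>R G\<^sub>B) + (- c) *\<^sub>R (E k - tri_centroid E)"
    by (simp add: scaleR_right_diff_distrib)
qed

lemma tri_coords_homothetic_combination:
  assumes "nondeg_tri E" "a \<noteq> 0" "b \<noteq> 0" "a + b \<noteq> 0"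
  defines "u \<equiv> b / (a + b)" and "c \<equiv> a * b / (a + b)"
  shows "tri_coords E (\<lambda>k. (u *\<^sub>R G\<^sub>A + (1 - u) *\<^sub>R G\<^sub>B) + c *\<^sub>R (E k - tri_centroid E))
    = (\<lambda>i. tri_coords E (\<lambda>k. G\<^sub>A + a *\<^sub>R (E k - tri_centroid E)) i
         + tri_coords E (\<lambda>k. G\<^sub>B + b *\<^sub>R (E k - tri_centroid E)) i)"
proof -
  have "1 - u = a / (a + b)" using assms(4) by (simp add: u_def field_simps)
  then have ua: "u * a = c" and ub: "(1 - u) * b = c" by (simp_all add: u_def c_def)
  have c: "c \<noteq> 0" using assms(2-4) by (simp add: c_def)
  then have "u \<noteq> 0" "1 - u \<noteq> 0" using ua ub by auto
  then have "u * x / c = x / a" "(1 - u) * y / c = y / b" for x y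
    by (simp flip: ua, simp flip: ub)
  then show ?thesis
    unfolding tri_coords_homothetic[OF assms(1,2)] tri_coords_homothetic[OF assms(1,3)]
      tri_coords_homothetic[OF assms(1) c] bary_affine_combination[OF assms(1)]
    by (simp add: add_divide_distrib)
qed

theorem theorem5:
  fixes E A B C :: "3 \<Rightarrow> real^2"
  assumes "nondeg_tri E"
    and "parallel_tri E A" and "parallel_tri E B"
    and "\<forall>i j k. i \<noteq> j \<and> j \<noteq> k \<and> i \<noteq> k \<longrightarrow>
           A i \<noteq> B j \<and> A j \<noteq> B i \<and>
           affine hull {A i, B j} \<inter> affine hull {A j, B i} = {C k}"
    and "nondeg_tri C"
  shows "parallel_tri E (\<lambda>k. 2 *\<^sub>R tri_centroid C - C k) \<and>
         tri_coords E (\<lambda>k. 2 *\<^sub>R tri_centroid C - C k) =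
           (\<lambda>i. tri_coords E A i + tri_coords E B i)"
proof -
  obtain a G\<^sub>A where a: "a \<noteq> 0" and A: "A = (\<lambda>k. G\<^sub>A + a *\<^sub>R (E k - tri_centroid E))"
    using parallel_tri_homothetic[OF assms(1,2)] .
  obtain b G\<^sub>B where b: "b \<noteq> 0" and B: "B = (\<lambda>k. G\<^sub>B + b *\<^sub>R (E k - tri_centroid E))"
    using parallel_tri_homothetic[OF assms(1,3)] .
  have ab: "a + b \<noteq> 0"
    using presum_ratio_sum_nonzero[OF A B] assms(4)[rule_format, of 1 2 3] by auto
  define u where "u = b / (a + b)"
  define c where "c = a * b / (a + b)"
  have C: "C = (\<lambda>k. (u *\<^sub>R G\<^sub>A + (1 - u) *\<^sub>R G\<^sub>B) + (- c) *\<^sub>R (E k - tri_centroid E))"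
    unfolding u_def c_def by (rule presum_homothetic[OF ab A B]) (use assms(4) in blast)
  have D: "(\<lambda>k. 2 *\<^sub>R tri_centroid C - C k)
      = (\<lambda>k. (u *\<^sub>R G\<^sub>A + (1 - u) *\<^sub>R G\<^sub>B) + c *\<^sub>R (E k - tri_centroid E))"
    unfolding C centroid_reflection_homothetic by simp
  have c: "c \<noteq> 0" using a b ab by (simp add: c_def)
  show ?thesis
    unfolding D A B
    using parallel_tri_of_homothetic[OF assms(1) c]
      tri_coords_homothetic_combination[OF assms(1) a b ab, folded u_def c_def] by simp
qed

end
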